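(* Let $\pi$ be a two-stack sortable permutation and $D(\pi)=(\pi_1,\pi_2)$. Then either $\pi=C_1(\pi_1,\pi_2)$, or $\pi=C_2(\pi_1,\pi_2,i)$ for some $1\le i\le\operatorname{slmax}(\pi_2)$.
   Context: For a finite sequence $A$ of distinct integers, the stack-sorting operator $\mathcal{S}$ is defined by $\mathcal{S}(\epsilon)=\epsilon$ for the empty sequence and, if $A$ is non-empty with largest element $m$, writing $A=A_L\cdot(m)\cdot A_R$ (concatenation), $\mathcal{S}(A)=\mathcal{S}(A_L)\cdot\mathcal{S}(A_R)\cdot(m)$. A permutation $\sigma\in\mathfrak{S}_n$, $n\ge1$, viewed as a sequence, is two-stack sortable if $\mathcal{S}(\mathcal{S}(\sigma))$ is the identity. For a sequence $A$ of distinct integers, $P(A)$ is the permutation with the same relative order as $A$ ($P(\epsilon)=\epsilon$). For a permutation $\pi$ of length $n\ge1$ written $\pi=\pi_\ell\cdot(n)\cdot\pi_r$ (parts before and after the entry $n$), $D(\pi)=(P(\pi_\ell),P(\pi_r))$. For a sequence $\tau$: $\tau^{+k}$ adds $k$ to each element; for $k_1<k_2$, $\tau^{+(k_1,m,k_2)}$ adds $k_1$ to elements strictly smaller than $m$ and $k_2$ to the others. $\operatorname{slmax}(\sigma)$ is the number of left-to-right maxima of $\mathcal{S}(\sigma)$ ($\operatorname{slmax}(\epsilon)=0$). For permutations $\pi_1\in\mathfrak{S}_k$, $\pi_2\in\mathfrak{S}_\ell$ (possibly empty), $C_1(\pi_1,\pi_2)=\pi_1\cdot(k+\ell+1)\cdot\pi_2^{+k}$;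 for non-empty $\pi_1,\pi_2$, with $a_1,\dots,a_t$ the values of the left-to-right maxima of $\mathcal{S}(\pi_2)$ in order and $1\le i\le t$, $C_2(\pi_1,\pi_2,i)=\pi_1^{+(0,k,a_i)}\cdot(k+\ell+1)\cdot\pi_2^{+(k-1,a_i+1,k)}$. *)

theory Defs
  imports Main
begin

(* Sequences of distinct integers are modelled as lists of naturals
   (only relative order matters; permutations have entries 1..n). *)

function stack_sort :: "nat list \<Rightarrow> nat list" where
  "stack_sort xs =
     (if xs = [] then []
      else (let m = Max (set xs)
            in stack_sort (takeWhile (\<lambda>x. x \<noteq> m) xs)
               @ stack_sort (tl (dropWhile (\<lambda>x. x \<noteq> m) xs)) @ [m]))"
  by pat_completeness auto
termination
proof (relation "measure length")
  show "wf (measure length)" by simp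
next
  fix xs :: "nat list" and m
  assume "xs \<noteq> []" "m = Max (set xs)"
  then have "m \<in> set xs" by simp
  then show "(takeWhile (\<lambda>x. x \<noteq> m) xs, xs) \<in> measure length"
    by (induction xs) auto
next
  fix xs :: "nat list" and m
  assume "xs \<noteq> []" "m = Max (set xs)"
  then show "(tl (dropWhile (\<lambda>x. x \<noteq> m) xs), xs) \<in> measure length"
  proof -
    have a: "length (dropWhile (\<lambda>x. x \<noteq> m) xs) \<le> length xs" by (rule length_dropWhile_le)
    have b: "length xs > 0" using \<open>xs \<noteq> []\<close> by simp
    from a b show ?thesis by (simp only: length_tl in_measure)
  qed
qed

declare stack_sort.simps[simp del]

definition is_perm :: "nat list \<Rightarrow> bool" where
  "is_perm \<pi> \<longleftrightarrow> distinct \<pi> \<and> set \<pi> = {1..length \<pi>}"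

definition two_stack_sortable :: "nat list \<Rightarrow> bool" where
  "two_stack_sortable \<sigma> \<longleftrightarrow> stack_sort (stack_sort \<sigma>) = [1..<length \<sigma> + 1]"

definition std :: "nat list \<Rightarrow> nat list" where
  "std A = map (\<lambda>x. card {y \<in> set A. y \<le> x}) A"

definition decomp :: "nat list \<Rightarrow> nat list \<times> nat list" where
  "decomp \<pi> = (std (takeWhile (\<lambda>x. x \<noteq> length \<pi>) \<pi>),
                std (tl (dropWhile (\<lambda>x. x \<noteq> length \<pi>) \<pi>)))"

definition shift :: "nat \<Rightarrow> nat list \<Rightarrow> nat list" where
  "shift k \<tau> = map (\<lambda>x. x + k) \<tau>"

definition shift3 :: "nat \<Rightarrow> nat \<Rightarrow> nat \<Rightarrow> nat list \<Rightarrow> nat list" where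
  "shift3 k1 m k2 \<tau> = map (\<lambda>x. if x < m then x + k1 else x + k2) \<tau>"

definition ltr_max_vals :: "nat list \<Rightarrow> nat list" where
  "ltr_max_vals xs = [xs ! j. j \<leftarrow> [0..<length xs], \<forall>i<j. xs ! i < xs ! j]"

definition slmax :: "nat list \<Rightarrow> nat" where
  "slmax \<sigma> = length (ltr_max_vals (stack_sort \<sigma>))"

definition C1 :: "nat list \<Rightarrow> nat list \<Rightarrow> nat list" where
  "C1 \<pi>1 \<pi>2 = \<pi>1 @ [length \<pi>1 + length \<pi>2 + 1] @ shift (length \<pi>1) \<pi>2"

(* i is 1-based: a_i = ltr_max_vals (S pi2) ! (i - 1) *)
definition C2 :: "nat list \<Rightarrow> nat list \<Rightarrow> nat \<Rightarrow> nat list" where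
  "C2 \<pi>1 \<pi>2 i =
     (let k = length \<pi>1; l = length \<pi>2; a = ltr_max_vals (stack_sort \<pi>2) ! (i - 1)
      in shift3 0 k a \<pi>1 @ [k + l + 1] @ shift3 (k - 1) (a + 1) k \<pi>2)"

end

theory Submission
  imports Defs "HOL-Library.Multiset"
begin

(* Write pi = L n R. Then S(pi) = S(L) S(R) n, so two-stack sortability of pi makes S(L) S(R)
   stack sortable, hence free of the pattern 231. As S(L) ends with M = max L, every other entry
   of L lies below every entry of R, so L consists of 1, ..., k - 1 (k = |L|) and M >= k.
   If M = k then pi = C1(pi1, pi2). Otherwise M - 1 lies in R, and no entry above M can precede
   it in S(R), since together with M it would form a 231. So M - 1 is a left-to-right maximum
   of S(R); its standardised value M - k is the a_i with pi = C2(pi1, pi2, i). *)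

section \<open>Stack sorting\<close>

lemma stack_sort_Nil [simp]: "stack_sort [] = []"
  by (simp add: stack_sort.simps)

lemma stack_sort_append_max:
  assumes "xs = A @ m # B" "m \<notin> set A" "m = Max (set xs)"
  shows "stack_sort xs = stack_sort A @ stack_sort B @ [m]"
proof -
  have "\<And>x. x \<in> set A \<Longrightarrow> x \<noteq> m" using assms(2) by auto
  then have "takeWhile (\<lambda>x. x \<noteq> m) xs = A" "dropWhile (\<lambda>x. x \<noteq> m) xs = m # B"
    using assms(1) by (simp_all add: takeWhile_append2 dropWhile_append2)
  moreover have "xs \<noteq> []" using assms(1) by simp
  ultimately show ?thesis
    by (subst stack_sort.simps) (simp add: Let_def flip: assms(3))
qed

lemma stack_sort_split_max:
  assumes "xs \<noteq> []"
  obtains A m B where "xs = A @ m # B" "\<forall>x\<in>set xs. x \<le> m"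
    "stack_sort xs = stack_sort A @ stack_sort B @ [m]"
proof -
  define m where "m = Max (set xs)"
  have "m \<in> set xs" using assms by (simp add: m_def)
  then obtain A B where "xs = A @ m # B" "m \<notin> set A"
    by (meson split_list_first)
  moreover have "\<forall>x\<in>set xs. x \<le> m" by (simp add: m_def)
  ultimately show ?thesis
    using stack_sort_append_max m_def that by blast
qed

lemma mset_stack_sort [simp]: "mset (stack_sort xs) = mset xs"
proof (induction "length xs" arbitrary: xs rule: less_induct)
  case less
  show ?case
  proof (cases "xs = []")
    case False
    then obtain A m B where xs: "xs = A @ m # B"
      and "stack_sort xs = stack_sort A @ stack_sort B @ [m]"
      by (rule stack_sort_split_max)
    moreover have "length A < length xs" "length B < length xs" by (simp_all add: xs)
    ultimately show ?thesis using less by simp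
  qed simp
qed

lemma set_stack_sort [simp]: "set (stack_sort xs) = set xs"
  using mset_eq_setD[OF mset_stack_sort] .

lemma distinct_stack_sort [simp]: "distinct (stack_sort xs) \<longleftrightarrow> distinct xs"
  using mset_eq_imp_distinct_iff[OF mset_stack_sort] .

lemma stack_sort_eq_snoc_Max:
  assumes "xs \<noteq> []"
  obtains ys where "stack_sort xs = ys @ [Max (set xs)]" "set xs = insert (Max (set xs)) (set ys)"
proof -
  obtain A m B where xs: "xs = A @ m # B" and max: "\<forall>x\<in>set xs. x \<le> m"
    and ss: "stack_sort xs = stack_sort A @ stack_sort B @ [m]"
    using assms by (rule stack_sort_split_max)
  have "m = Max (set xs)" using max by (intro Max_eqI[symmetric]) (auto simp: xs)
  moreover have "set xs = insert m (set (stack_sort A @ stack_sort B))" by (simp add: xs)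
  ultimately show ?thesis using ss that[of "stack_sort A @ stack_sort B"] by simp
qed

section \<open>The pattern 231\<close>

definition contains_231 :: "nat list \<Rightarrow> bool" where
  "contains_231 xs \<longleftrightarrow>
     (\<exists>u c v. xs = u @ c # v \<and> (\<exists>b\<in>set u. \<exists>a\<in>set v. a < b \<and> b < c))"

lemma contains_231I:
  "xs = u @ c # v \<Longrightarrow> b \<in> set u \<Longrightarrow> a \<in> set v \<Longrightarrow> a < b \<Longrightarrow> b < c \<Longrightarrow> contains_231 xs"
  unfolding contains_231_def by blast

lemma contains_231_append_max:
  assumes "contains_231 (A @ m # B)" "\<forall>x\<in>set (A @ B). x \<le> m"
  shows "contains_231 A \<or> contains_231 B \<or> (\<exists>b\<in>set A. \<exists>a\<in>set B. a < b)"
proof -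
  obtain u c v b a where uv: "u @ c # v = A @ m # B" and b: "b \<in> set u" and a: "a \<in> set v"
    and "a < b" "b < c"
    using assms(1) unfolding contains_231_def by metis
  have "c \<in> set (A @ m # B)" by (simp flip: uv)
  then have "c \<le> m" using assms(2) by auto
  then have "b < m" "a < m" using \<open>a < b\<close> \<open>b < c\<close> by simp_all
  consider (left) w where "A = u @ c # w" "v = w @ m # B"
    | (middle) "u = A" "v = B"
    | (right) w where "u = A @ m # w" "B = w @ c # v"
    using uv by (auto simp: append_eq_append_conv2 Cons_eq_append_conv append_eq_Cons_conv)
  then show ?thesis
  proof cases
    case left
    then show ?thesis
      using a b \<open>a < b\<close> \<open>b < c\<close> \<open>a < m\<close> contains_231I by fastforce
  next
    case middle
    then show ?thesis using a b \<open>a < b\<close> by blast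
  next
    case right
    then show ?thesis
      using a b \<open>a < b\<close> \<open>b < c\<close> \<open>b < m\<close> contains_231I by fastforce
  qed
qed

theorem sorted_stack_sort_imp_not_contains_231:
  "sorted (stack_sort xs) \<Longrightarrow> \<not> contains_231 xs"
proof (induction "length xs" arbitrary: xs rule: less_induct)
  case less
  show ?case
  proof (cases "xs = []")
    case True
    then show ?thesis by (simp add: contains_231_def)
  next
    case False
    then obtain A m B where xs: "xs = A @ m # B" and max: "\<forall>x\<in>set xs. x \<le> m"
      and ss: "stack_sort xs = stack_sort A @ stack_sort B @ [m]"
      by (rule stack_sort_split_max)
    have "sorted (stack_sort A)" "sorted (stack_sort B)"
      and below: "\<forall>x\<in>set A. \<forall>y\<in>set B. x \<le> y"
      using less.prems by (auto simp: ss sorted_append)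
    moreover have "length A < length xs" "length B < length xs" by (simp_all add: xs)
    ultimately have "\<not> contains_231 A" "\<not> contains_231 B" using less.hyps by blast+
    moreover have "\<forall>x\<in>set (A @ B). x \<le> m" using max by (simp add: xs)
    ultimately show ?thesis
      using contains_231_append_max[of A m B] below by (force simp: xs)
  qed
qed

section \<open>Relabelling, standardisation and left-to-right maxima\<close>

lemma stack_sort_map_strict_mono:
  assumes "strict_mono_on (set xs) g"
  shows "stack_sort (map g xs) = map g (stack_sort xs)"
  using assms
proof (induction "length xs" arbitrary: xs rule: less_induct)
  case less
  show ?case
  proof (cases "xs = []")
    case False
    define m where "m = Max (set xs)"
    have "m \<in> set xs" using False by (simp add: m_def)
    then obtain A B where xs: "xs = A @ m # B" and "m \<notin> set A"
      by (meson split_list_first)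
    have sub: "set A \<subseteq> set xs" "set B \<subseteq> set xs" by (auto simp: xs)
    then have mono: "strict_mono_on (set A) g" "strict_mono_on (set B) g"
      using monotone_on_subset[OF less.prems] by blast+
    have gxs: "map g xs = map g A @ g m # map g B" by (simp add: xs)
    have "g m \<notin> set (map g A)"
      using inj_on_image_mem_iff[OF strict_mono_on_imp_inj_on[OF less.prems] \<open>m \<in> set xs\<close> sub(1)]
        \<open>m \<notin> set A\<close> by simp
    moreover have "g m = Max (set (map g xs))"
    proof (rule Max_eqI[symmetric])
      fix y assume "y \<in> set (map g xs)"
      then obtain x where "x \<in> set xs" "y = g x" by auto
      moreover have "x \<le> m" using \<open>x \<in> set xs\<close> by (simp add: m_def)
      ultimately show "y \<le> g m"
        using strict_mono_on_leD[OF less.prems _ \<open>m \<in> set xs\<close>] by blast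
    qed (use \<open>m \<in> set xs\<close> in simp_all)
    ultimately have "stack_sort (map g xs) = stack_sort (map g A) @ stack_sort (map g B) @ [g m]"
      by (rule stack_sort_append_max[OF gxs])
    moreover have "stack_sort xs = stack_sort A @ stack_sort B @ [m]"
      using xs \<open>m \<notin> set A\<close> m_def by (rule stack_sort_append_max)
    moreover have "length A < length xs" "length B < length xs" by (simp_all add: xs)
    ultimately show ?thesis using less.hyps mono by simp
  qed simp
qed

lemma length_std [simp]: "length (std xs) = length xs"
  by (simp add: std_def)

lemma std_eq_map_strict_mono:
  assumes "distinct xs" "strict_mono_on (set xs) g" "g ` set xs \<subseteq> {1..length xs}"
  shows "std xs = map g xs"
  unfolding std_def
proof (rule map_cong[OF refl])
  fix x assume x: "x \<in> set xs"
  have inj: "inj_on g (set xs)" using assms(2) by (rule strict_mono_on_imp_inj_on)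
  have image: "g ` set xs = {1..length xs}"
    by (rule card_subset_eq[OF finite_atLeastAtMost assms(3)])
      (simp add: card_image[OF inj] distinct_card[OF assms(1)])
  have "g ` {y \<in> set xs. y \<le> x} = {z \<in> g ` set xs. z \<le> g x}"
    using strict_mono_on_less_eq[OF assms(2) _ x] by auto
  also have "\<dots> = {1..g x}"
    using image imageI[of x "set xs" g] x by (auto simp del: imageI)
  finally have "card {1..g x} = card {y \<in> set xs. y \<le> x}"
    using inj by (metis (no_types, lifting) card_image inj_on_subset mem_Collect_eq subsetI)
  then show "card {y \<in> set xs. y \<le> x} = g x" by simp
qed

lemma in_set_ltr_max_vals:
  assumes "xs = p @ x # q" "\<forall>y\<in>set p. y < x"
  shows "x \<in> set (ltr_max_vals xs)"
proof -
  have "\<forall>i<length p. xs ! i < xs ! length p"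
    using assms by (auto simp: nth_append)
  moreover have "length p < length xs" "xs ! length p = x" using assms(1) by simp_all
  ultimately show ?thesis unfolding ltr_max_vals_def by force
qed

section \<open>The decomposition of a two-stack-sortable permutation\<close>

lemma not_contains_231_stack_sort_append_le:
  assumes "\<not> contains_231 (stack_sort L @ Y)" "x \<in> set L" "x < Max (set L)" "y \<in> set Y"
  shows "x \<le> y"
proof (rule ccontr)
  assume "\<not> x \<le> y"
  have "L \<noteq> []" using assms(2) by auto
  then obtain ys where "stack_sort L = ys @ [Max (set L)]" "set L = insert (Max (set L)) (set ys)"
    by (rule stack_sort_eq_snoc_Max)
  then have "stack_sort L @ Y = ys @ Max (set L) # Y" "x \<in> set ys"
    using assms(2,3) by (simp, metis insert_iff less_irrefl)
  then have "contains_231 (stack_sort L @ Y)"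
    by (rule contains_231I) (use assms(3,4) \<open>\<not> x \<le> y\<close> in auto)
  with assms(1) show False ..
qed

lemma not_contains_231_stack_sort_append_prefix_le:
  assumes "\<not> contains_231 (stack_sort L @ p @ z # q)" "L \<noteq> []" "z < Max (set L)" "y \<in> set p"
  shows "y \<le> Max (set L)"
proof (rule ccontr)
  assume "\<not> y \<le> Max (set L)"
  obtain p1 p2 where "p = p1 @ y # p2" using assms(4) by (meson split_list)
  then have "stack_sort L @ p @ z # q = (stack_sort L @ p1) @ y # (p2 @ z # q)"
    "Max (set L) \<in> set (stack_sort L @ p1)" using assms(2) by simp_all
  then have "contains_231 (stack_sort L @ p @ z # q)"
    by (rule contains_231I) (use assms(3) \<open>\<not> y \<le> Max (set L)\<close> in auto)
  with assms(1) show False ..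
qed

lemma Max_set_append_Cons_above:
  assumes "\<forall>x\<in>set (L @ R). x < n"
  shows "Max (set (L @ n # R)) = n"
proof (rule Max_eqI)
  fix y assume "y \<in> set (L @ n # R)"
  then have "y = n \<or> y \<in> set (L @ R)" by auto
  then show "y \<le> n" using assms less_imp_le by blast
qed simp_all

lemma two_stack_sortable_imp_not_contains_231:
  assumes "two_stack_sortable (L @ n # R)" "\<forall>x\<in>set (L @ R). x < n"
  shows "\<not> contains_231 (stack_sort L @ stack_sort R)"
proof -
  let ?X = "stack_sort L @ stack_sort R"
  have X: "\<forall>x\<in>set (?X @ []). x < n" using assms(2) by simp
  have "n \<notin> set L" using assms(2) by auto
  then have "stack_sort (L @ n # R) = ?X @ [n]"
    using stack_sort_append_max[OF refl _ Max_set_append_Cons_above[OF assms(2), symmetric]]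
    by simp
  moreover have "stack_sort (?X @ n # []) = stack_sort ?X @ stack_sort [] @ [n]"
    using X by (intro stack_sort_append_max[OF refl _ Max_set_append_Cons_above[OF X, symmetric]]) auto
  ultimately have ss: "stack_sort (stack_sort (L @ n # R)) = stack_sort ?X @ [n]" by simp
  have "sorted (stack_sort (stack_sort (L @ n # R)))"
    using assms(1) by (simp only: two_stack_sortable_def sorted_upt)
  then have "sorted (stack_sort ?X @ [n])" by (simp only: ss)
  then show ?thesis
    by (intro sorted_stack_sort_imp_not_contains_231) (simp add: sorted_append)
qed

lemma finite_down_closed_eq_atLeastAtMost:
  fixes S :: "nat set"
  assumes "finite S" "0 \<notin> S" "\<And>x z. x \<in> S \<Longrightarrow> 1 \<le> z \<Longrightarrow> z \<le> x \<Longrightarrow> z \<in> S"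
  shows "S = {1..card S}"
proof (rule card_subset_eq)
  show "S \<subseteq> {1..card S}"
  proof
    fix x assume x: "x \<in> S"
    have "card {1..x} \<le> card S" using assms(3)[OF x] by (intro card_mono[OF assms(1)]) auto
    moreover have "1 \<le> x" using x assms(2) by (cases x) auto
    ultimately show "x \<in> {1..card S}" by simp
  qed
qed simp_all

lemma not_contains_231_left_below_Max:
  assumes "\<not> contains_231 (stack_sort L @ stack_sort R)"
    and "distinct (L @ R)" "set (L @ R) = {1..length (L @ R)}"
  shows "set L - {Max (set L)} = {1..<length L}"
proof (cases "L = []")
  case False
  define S where "S = set L - {Max (set L)}"
  have below: "x < Max (set L)" if "x \<in> S" for x
    using that by (auto simp: S_def order.not_eq_order_implies_strict)
  have "S = {1..card S}"
  proof (rule finite_down_closed_eq_atLeastAtMost)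
    have "0 \<notin> set (L @ R)" using assms(3) by auto
    then show "0 \<notin> S" by (simp add: S_def)
  next
    fix x z assume "x \<in> S" "1 \<le> z" "z \<le> x"
    have "x \<in> set (L @ R)" using \<open>x \<in> S\<close> by (simp add: S_def)
    then have "z \<in> set (L @ R)"
      using \<open>1 \<le> z\<close> \<open>z \<le> x\<close> by (metis assms(3) atLeastAtMost_iff order.trans)
    moreover have "z \<notin> set R"
    proof
      assume "z \<in> set R"
      moreover have "x \<in> set L" using \<open>x \<in> S\<close> by (simp add: S_def)
      ultimately have "x \<le> z"
        using not_contains_231_stack_sort_append_le[OF assms(1)] below[OF \<open>x \<in> S\<close>] by simp
      then show False using \<open>z \<le> x\<close> \<open>x \<in> set L\<close> \<open>z \<in> set R\<close> assms(2) by auto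
    qed
    ultimately show "z \<in> S" using below[OF \<open>x \<in> S\<close>] \<open>z \<le> x\<close> by (auto simp: S_def)
  qed (simp add: S_def)
  moreover have "card S = length L - 1"
    using assms(2) False by (simp add: S_def distinct_card)
  moreover have "{1..length L - 1} = {1..<length L}"
    using False by (cases "length L") (simp_all add: atLeastLessThanSuc_atLeastAtMost)
  ultimately show ?thesis unfolding S_def by simp
qed simp

lemma not_contains_231_left_values:
  assumes "\<not> contains_231 (stack_sort L @ stack_sort R)"
    and "distinct (L @ R)" "set (L @ R) = {1..length (L @ R)}"
  shows "set L = {1..length L} \<or> (\<exists>M. length L < M \<and> set L = insert M {1..<length L})"
proof (cases "L = []")
  case False
  define M where "M = Max (set L)"
  have "M \<in> set L" using False by (simp add: M_def)
  then have L: "set L = insert M {1..<length L}"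
    using not_contains_231_left_below_Max[OF assms, folded M_def] by blast
  have "0 \<notin> set (L @ R)" using assms(3) by auto
  then have "M \<noteq> 0" using \<open>M \<in> set L\<close> by (intro notI) simp
  moreover have "M \<notin> {1..<length L}"
    using not_contains_231_left_below_Max[OF assms, folded M_def] by blast
  ultimately consider "M = length L" | "length L < M" by fastforce
  then show ?thesis
  proof cases
    case 1
    have "insert (length L) {1..<length L} = {1..length L}"
      using False by (simp add: atLeastLessThanSuc Suc_le_eq flip: atLeastLessThanSuc_atLeastAtMost)
    then show ?thesis using L 1 by simp
  qed (use L in blast)
qed simp

lemma C1_std:
  assumes "distinct (L @ R)" "set (L @ R) = {1..length (L @ R)}" "set L = {1..length L}"
  shows "L @ (length L + length R + 1) # R = C1 (std L) (std R)"
proof -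
  define k where "k = length L"
  have "set R = set (L @ R) - set L" using assms(1) by auto
  then have setR: "set R = {k<..k + length R}" using assms(2,3) by (auto simp: k_def)
  have "std L = map (\<lambda>x. x) L"
    using assms by (intro std_eq_map_strict_mono strict_mono_on_ident) auto
  moreover have "std R = map (\<lambda>y. y - k) R"
    using assms(1) by (intro std_eq_map_strict_mono strict_mono_onI) (auto simp: setR)
  moreover have "shift k (map (\<lambda>y. y - k) R) = R"
    unfolding shift_def map_map by (rule map_idI) (auto simp: setR)
  ultimately show ?thesis by (simp add: C1_def k_def)
qed

(* The shape of the case C2: L consists of 1, ..., k - 1 and one value M > k. The value a_i of
   C2 is then M - k, the standardised image of M - 1 in R. *)
locale C2_shape =
  fixes L R :: "nat list" and M :: nat
  assumes distinct_parts: "distinct (L @ R)"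
    and parts_values: "set (L @ R) = {1..length (L @ R)}"
    and left_values: "set L = insert M {1..<length L}"
    and max_above: "length L < M"
begin

lemma M_in_left: "M \<in> set L"
  by (simp add: left_values)

lemma M_not_in_right: "M \<notin> set R"
  using M_in_left distinct_parts by auto

lemma length_left_pos: "0 < length L"
  using M_in_left by (cases L) auto

lemma M_le_length: "M \<le> length L + length R"
  using parts_values M_in_left by (metis atLeastAtMost_iff length_append set_append UnI1)

lemma Max_left: "Max (set L) = M"
proof (rule Max_eqI)
  fix y assume "y \<in> set L"
  then show "y \<le> M" using max_above unfolding left_values by auto
qed (simp_all add: M_in_left)

lemma right_values: "set R = {length L..length L + length R} - {M}"
proof -
  have "set R = set (L @ R) - set L" using distinct_parts by auto
  also have "\<dots> = {1..length L + length R} - insert M {1..<length L}"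
    unfolding parts_values left_values by simp
  also have "\<dots> = {length L..length L + length R} - {M}"
    using max_above by auto (use length_left_pos in linarith)
  finally show ?thesis .
qed

lemma std_left: "std L = map (\<lambda>x. min x (length L)) L"
proof (rule std_eq_map_strict_mono)
  show "distinct L" using distinct_parts by simp
  show "strict_mono_on (set L) (\<lambda>x. min x (length L))"
    unfolding left_values using max_above by (auto intro!: strict_mono_onI)
  show "(\<lambda>x. min x (length L)) ` set L \<subseteq> {1..length L}"
    unfolding left_values using max_above by auto (use length_left_pos in linarith)
qed

definition right_std :: "nat \<Rightarrow> nat" where
  "right_std y = (if y < M then y + 1 - length L else y - length L)"

lemma strict_mono_right_std: "strict_mono_on (set R) right_std"
proof (rule strict_mono_onI)
  fix r s assume "r \<in> set R" "s \<in> set R" "r < s"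
  then have "length L \<le> r" "r \<noteq> M" "s \<noteq> M" by (auto simp: right_values)
  then show "right_std r < right_std s" using \<open>r < s\<close> unfolding right_std_def by auto
qed

lemma std_right: "std R = map right_std R"
proof (rule std_eq_map_strict_mono[OF _ strict_mono_right_std])
  show "distinct R" using distinct_parts by simp
  show "right_std ` set R \<subseteq> {1..length R}"
  proof
    fix z assume "z \<in> right_std ` set R"
    then obtain y where "y \<in> set R" "z = right_std y" by blast
    moreover from this(1) have "length L \<le> y" "y \<le> length L + length R" "y \<noteq> M"
      by (auto simp: right_values)
    ultimately show "z \<in> {1..length R}"
      using max_above M_le_length unfolding right_std_def by auto
  qed
qed

lemma right_std_pred_M: "right_std (M - 1) = M - length L"
  using max_above by (simp add: right_std_def)

lemma in_ltr_max_vals_stack_sort_std_right: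
  assumes "\<not> contains_231 (stack_sort L @ stack_sort R)"
  shows "M - length L \<in> set (ltr_max_vals (stack_sort (std R)))"
proof -
  have "M - 1 \<in> set R"
    unfolding right_values using max_above M_le_length by auto
  then obtain p q where pq: "stack_sort R = p @ (M - 1) # q"
    using split_list[of "M - 1" "stack_sort R"] by auto
  have "distinct (stack_sort R)" using distinct_parts by simp
  then have p: "set p \<subseteq> set R" "M - 1 \<notin> set p"
    using set_stack_sort[of R] unfolding pq by auto
  have below: "y < M - 1" if "y \<in> set p" for y
  proof -
    \<comment> \<open>an entry above M before M - 1 would form a 231 with M, the last entry of S(L)\<close>
    have "L \<noteq> []" "M - 1 < Max (set L)" using length_left_pos max_above Max_left by auto
    then have "y \<le> M"
      using not_contains_231_stack_sort_append_prefix_le[of L p "M - 1" q y] assms pq that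
      unfolding Max_left by simp
    moreover have "y \<noteq> M" "y \<noteq> M - 1" using M_not_in_right p that by auto
    ultimately show ?thesis by simp
  qed
  have "stack_sort (std R) = map right_std p @ (M - length L) # map right_std q"
    unfolding std_right stack_sort_map_strict_mono[OF strict_mono_right_std] pq
    using right_std_pred_M by simp
  moreover have "\<forall>z\<in>set (map right_std p). z < M - length L"
  proof
    fix z assume "z \<in> set (map right_std p)"
    then obtain y where "y \<in> set p" "z = right_std y" by auto
    then show "z < M - length L"
      using strict_mono_onD[OF strict_mono_right_std _ \<open>M - 1 \<in> set R\<close> below] p(1)
        right_std_pred_M by auto
  qed
  ultimately show ?thesis by (rule in_set_ltr_max_vals)
qed

lemma C2_std:
  assumes "ltr_max_vals (stack_sort (std R)) ! (i - 1) = M - length L"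
  shows "L @ (length L + length R + 1) # R = C2 (std L) (std R) i"
proof -
  have "shift3 0 (length L) (M - length L) (std L) = L"
    unfolding std_left shift3_def map_map
  proof (rule map_idI)
    fix x assume "x \<in> set L"
    then have "x = M \<or> x < length L" by (auto simp: left_values)
    then show "((\<lambda>x. if x < length L then x + 0 else x + (M - length L)) \<circ> (\<lambda>x. min x (length L))) x = x"
      using max_above by auto
  qed
  moreover have "shift3 (length L - 1) (M - length L + 1) (length L) (std R) = R"
    unfolding std_right shift3_def map_map
  proof (rule map_idI)
    fix y assume "y \<in> set R"
    then have "length L \<le> y" "y \<noteq> M" by (auto simp: right_values)
    then show "((\<lambda>x. if x < M - length L + 1 then x + (length L - 1) else x + length L) \<circ> right_std) y = y"
      using max_above length_left_pos unfolding right_std_def comp_def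
      by (cases "y < M") (auto, use length_left_pos in linarith)
  qed
  ultimately show ?thesis using assms by (simp add: C2_def Let_def)
qed

lemma exists_C2:
  assumes "\<not> contains_231 (stack_sort L @ stack_sort R)"
  shows "std L \<noteq> [] \<and> std R \<noteq> [] \<and>
    (\<exists>i. 1 \<le> i \<and> i \<le> slmax (std R) \<and> L @ (length L + length R + 1) # R = C2 (std L) (std R) i)"
proof -
  obtain j where j: "j < slmax (std R)" "ltr_max_vals (stack_sort (std R)) ! j = M - length L"
    using in_ltr_max_vals_stack_sort_std_right[OF assms] unfolding slmax_def
    by (metis in_set_conv_nth)
  have "L @ (length L + length R + 1) # R = C2 (std L) (std R) (j + 1)"
    using j(2) by (intro C2_std) simp
  moreover have "std L \<noteq> []" using M_in_left by (cases L) (simp_all add: std_def)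
  moreover have "std R \<noteq> []"
  proof
    assume "std R = []"
    with j(1) show False by (simp add: slmax_def ltr_max_vals_def)
  qed
  moreover have "1 \<le> j + 1" "j + 1 \<le> slmax (std R)" using j(1) by simp_all
  ultimately show ?thesis by blast
qed

end

lemma takeWhile_neq_append_Cons_dropWhile:
  "m \<in> set xs \<Longrightarrow> xs = takeWhile (\<lambda>x. x \<noteq> m) xs @ m # tl (dropWhile (\<lambda>x. x \<noteq> m) xs)"
  by (induction xs) auto

lemma is_perm_append_Cons_length:
  assumes "is_perm (L @ n # R)" "n = length L + length R + 1"
  shows "distinct (L @ R)" "set (L @ R) = {1..length (L @ R)}" "\<forall>x\<in>set (L @ R). x < n"
proof -
  have "length (L @ n # R) = n" using assms(2) by simp
  then have "distinct (L @ n # R)" and set: "set (L @ n # R) = {1..n}"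
    using assms(1) unfolding is_perm_def by metis+
  then show "distinct (L @ R)" by simp
  have "set (L @ R) = set (L @ n # R) - {n}" using \<open>distinct (L @ n # R)\<close> by auto
  also have "\<dots> = {1..<n}" unfolding set by (rule atLeastLessThan_eq_atLeastAtMost_diff[symmetric])
  finally have "set (L @ R) = {1..<n}" .
  then show "set (L @ R) = {1..length (L @ R)}" "\<forall>x\<in>set (L @ R). x < n"
    using assms(2) atLeastLessThanSuc_atLeastAtMost by simp_all
qed

lemma two_stack_sortable_decomp:
  assumes "is_perm \<pi>" "length \<pi> \<ge> 1" "two_stack_sortable \<pi>" "decomp \<pi> = (\<pi>1, \<pi>2)"
  obtains L R where "\<pi> = L @ (length L + length R + 1) # R" "\<pi>1 = std L" "\<pi>2 = std R"
    "distinct (L @ R)" "set (L @ R) = {1..length (L @ R)}"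
    "\<not> contains_231 (stack_sort L @ stack_sort R)"
proof -
  define n where "n = length \<pi>"
  define L where "L = takeWhile (\<lambda>x. x \<noteq> n) \<pi>"
  define R where "R = tl (dropWhile (\<lambda>x. x \<noteq> n) \<pi>)"
  have "n \<in> set \<pi>" using assms(1,2) by (auto simp: is_perm_def n_def)
  then have \<pi>: "\<pi> = L @ n # R" unfolding L_def R_def by (rule takeWhile_neq_append_Cons_dropWhile)
  have n: "n = length L + length R + 1" using arg_cong[OF \<pi>, of length] by (simp add: n_def)
  note parts = is_perm_append_Cons_length[OF assms(1)[unfolded \<pi>] n]
  show thesis
  proof (rule that)
    show "\<pi> = L @ (length L + length R + 1) # R" using \<pi> n by simp
    show "\<pi>1 = std L" "\<pi>2 = std R" using assms(4) by (simp_all add: decomp_def L_def R_def n_def)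
    show "\<not> contains_231 (stack_sort L @ stack_sort R)"
      using two_stack_sortable_imp_not_contains_231[OF assms(3)[unfolded \<pi>] parts(3)] .
  qed (use parts in simp_all)
qed

theorem proposition8:
  fixes \<pi> \<pi>1 \<pi>2 :: "nat list"
  assumes "is_perm \<pi>" and "length \<pi> \<ge> 1"
    and "two_stack_sortable \<pi>"
    and "decomp \<pi> = (\<pi>1, \<pi>2)"
  shows "\<pi> = C1 \<pi>1 \<pi>2 \<or>
         (\<pi>1 \<noteq> [] \<and> \<pi>2 \<noteq> [] \<and>
          (\<exists>i. 1 \<le> i \<and> i \<le> slmax \<pi>2 \<and> \<pi> = C2 \<pi>1 \<pi>2 i))"
proof -
  obtain L R where \<pi>: "\<pi> = L @ (length L + length R + 1) # R" and \<pi>12: "\<pi>1 = std L" "\<pi>2 = std R"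
    and parts: "distinct (L @ R)" "set (L @ R) = {1..length (L @ R)}"
    and no_231: "\<not> contains_231 (stack_sort L @ stack_sort R)"
    using assms by (rule two_stack_sortable_decomp)
  consider "set L = {1..length L}" | M where "length L < M" "set L = insert M {1..<length L}"
    using not_contains_231_left_values[OF no_231 parts] by blast
  then show ?thesis
  proof cases
    case 1
    then have "\<pi> = C1 \<pi>1 \<pi>2" unfolding \<pi>12 \<pi> by (rule C1_std[OF parts])
    then show ?thesis ..
  next
    case (2 M)
    with parts interpret C2_shape L R M by unfold_locales
    show ?thesis using exists_C2[OF no_231] unfolding \<pi>12 \<pi> by (rule disjI2)
  qed
qed

end
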